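(* Let $Y_i=\kappa_i\mu_{0,i}+n^{-1/2}Z_i$, $i\ge1$, with $Z_i$ i.i.d. standard normal, $\mu_0\in\ell_2$, and $(\kappa_i)$ satisfying $C^{-1}i^{-p}\le\kappa_i\le Ci^{-p}$ for some $p\ge0$, $C\ge1$. Define \[ \mathbb{M}_n(\alpha)=\sum_{i=1}^{\infty}\frac{n\log i}{i^{1+2\alpha}\kappa_i^{-2}+n}-\sum_{i=1}^{\infty}\frac{n^2i^{1+2\alpha}\kappa_i^{-2}\log i}{(i^{1+2\alpha}\kappa_i^{-2}+n)^2}Y_i^2 \] and \[ h_n(\alpha)=\frac{1+2\alpha+2p}{n^{1/(1+2\alpha+2p)}\log n}\sum_{i=1}^{\infty}\frac{n^2 i^{1+2\alpha}\mu_{0,i}^2\log i}{(i^{1+2\alpha}\kappa_i^{-2}+n)^2}. \] Then for any $\alpha>0$, \[ \operatorname{var}_0\frac{(1+2\alpha+2p)\mathbb{M}_n(\alpha)}{n^{1/(1+2\alpha+2p)}}\lesssim n^{-1/(1+2\alpha+2p)}(\log n)^2\big(1+h_n(\alpha)\big), \] with an implicit constant that does not depend on $\mu_0$ and $\alpha$.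
   Context: $\operatorname{var}_0$ is the variance under the law of $Y$ with true parameter $\mu_0$. $a\lesssim b$ means $a\le Kb$ for a constant $K>0$. $\mathbb{M}_n$ is the derivative of the marginal log-likelihood of $\alpha$. *)

theory Defs
  imports "HOL-Probability.Probability"
begin

text \<open>Sequences are indexed by nat; only indices i \<ge> 1 are used (index 0 is ignored).
  Sums over i \<ge> 1 are written as suminf over k with i = Suc k.\<close>

definition Yobs :: "(nat \<Rightarrow> real) \<Rightarrow> (nat \<Rightarrow> real) \<Rightarrow> nat \<Rightarrow> (nat \<Rightarrow> 'a \<Rightarrow> real) \<Rightarrow> nat \<Rightarrow> 'a \<Rightarrow> real" where
  "Yobs \<kappa> \<mu>0 n Z i \<omega> = \<kappa> i * \<mu>0 i + Z i \<omega> / sqrt (real n)"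

definition Mn :: "(nat \<Rightarrow> real) \<Rightarrow> nat \<Rightarrow> real \<Rightarrow> (nat \<Rightarrow> real) \<Rightarrow> real" where
  "Mn \<kappa> n \<alpha> Y =
     (\<Sum>k. let i = real (Suc k) in
        real n * ln i / (i powr (1 + 2*\<alpha>) * \<kappa> (Suc k) powr (-2) + real n))
   - (\<Sum>k. let i = real (Suc k) in
        (real n)^2 * i powr (1 + 2*\<alpha>) * \<kappa> (Suc k) powr (-2) * ln i
          / (i powr (1 + 2*\<alpha>) * \<kappa> (Suc k) powr (-2) + real n)^2 * (Y (Suc k))^2)"

definition hn :: "(nat \<Rightarrow> real) \<Rightarrow> real \<Rightarrow> (nat \<Rightarrow> real) \<Rightarrow> nat \<Rightarrow> real \<Rightarrow> real" where
  "hn \<kappa> p \<mu>0 n \<alpha> =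
     (1 + 2*\<alpha> + 2*p) / (real n powr (1 / (1 + 2*\<alpha> + 2*p)) * ln (real n)) *
     (\<Sum>k. let i = real (Suc k) in
        (real n)^2 * i powr (1 + 2*\<alpha>) * (\<mu>0 (Suc k))^2 * ln i
          / (i powr (1 + 2*\<alpha>) * \<kappa> (Suc k) powr (-2) + real n)^2)"

end

theory Submission
  imports Defs
begin

text \<open>
  Mn is an affine function of the independent squares Y_i^2 = (kappa_i mu_0i + Z_i / sqrt n)^2,
  whose variances are 4 kappa_i^2 mu_0i^2 / n + 2 / n^2. With the weights
  w_i = n^2 lambda_i log i / (lambda_i + n)^2, lambda_i = i^(1+2 alpha) / kappa_i^2, its variance is
  therefore the sum of a signal part sum w_i^2 4 kappa_i^2 mu_0i^2 / n and a noise part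
  2 sum (w_i / n)^2. Since lambda_i is comparable to i^beta, beta = 1 + 2 alpha + 2 p, one has
  beta w_i / n <= const * log n uniformly in i, so the signal part is at most a multiple of log n
  times the series defining h_n. In the noise part the terms are O((log n)^2) for the n^(1/beta)
  indices with i^beta <= n and decay like (n / i^beta)^(3/2) beyond, so it is
  O(n^(1/beta) (log n)^2). The variance of the infinite sum of squares is reached from the
  partial sums by Fatou's lemma.
\<close>

lemma std_normal_distributed_moment:
  assumes "distributed M lborel G std_normal_density"
  shows "integrable M (\<lambda>\<omega>. G \<omega> ^ k)"
    and "(\<integral>\<omega>. G \<omega> ^ k \<partial>M) = (\<integral>x. std_normal_density x * x ^ k \<partial>lborel)"
  using distributed_integrable[OF assms, of "\<lambda>x. x ^ k"]
    distributed_integral[OF assms, of "\<lambda>x. x ^ k"] integrable_std_normal_moment[of k]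
  by simp_all

lemma std_normal_distributed_quartic:
  fixes c0 c1 c2 c3 c4 :: real
  assumes "prob_space M" and G: "distributed M lborel G std_normal_density"
  defines "q \<equiv> \<lambda>\<omega>. c0 + c1 * G \<omega> + c2 * G \<omega> ^ 2 + c3 * G \<omega> ^ 3 + c4 * G \<omega> ^ 4"
  shows "integrable M q" and "(\<integral>\<omega>. q \<omega> \<partial>M) = c0 + c2 + 3 * c4"
proof -
  interpret prob_space M by fact
  note moment = std_normal_distributed_moment[OF G]
  have "(\<integral>\<omega>. G \<omega> ^ 1 \<partial>M) = 0" "(\<integral>\<omega>. G \<omega> ^ 3 \<partial>M) = 0"
    using moment(2)[of 1] moment(2)[of 3] integral_std_normal_moment_odd[of 0]
      integral_std_normal_moment_odd[of 1] by simp_all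
  moreover have "(\<integral>\<omega>. G \<omega> ^ 2 \<partial>M) = 1" "(\<integral>\<omega>. G \<omega> ^ 4 \<partial>M) = 3"
    using moment(2)[of 2] moment(2)[of 4] integral_std_normal_moment_even[of 1]
      integral_std_normal_moment_even[of 2] by (simp_all add: fact_numeral)
  moreover note moment(1)[of 1] moment(1)[of 2] moment(1)[of 3] moment(1)[of 4]
  ultimately show "integrable M q" "(\<integral>\<omega>. q \<omega> \<partial>M) = c0 + c2 + 3 * c4"
    unfolding q_def by (simp_all add: prob_space)
qed

lemma std_normal_distributed_shifted_square:
  fixes a t :: real
  assumes M: "prob_space M" and G: "distributed M lborel G std_normal_density" and t: "t \<noteq> 0"
  defines "D \<equiv> \<lambda>\<omega>. (a + G \<omega> / t)\<^sup>2 - (a\<^sup>2 + 1 / t\<^sup>2)"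
  shows "integrable M (\<lambda>\<omega>. (a + G \<omega> / t)\<^sup>2)" and "(\<integral>\<omega>. (a + G \<omega> / t)\<^sup>2 \<partial>M) = a\<^sup>2 + 1 / t\<^sup>2"
    and "integrable M D" and "(\<integral>\<omega>. D \<omega> \<partial>M) = 0"
    and "integrable M (\<lambda>\<omega>. (D \<omega>)\<^sup>2)" and "(\<integral>\<omega>. (D \<omega>)\<^sup>2 \<partial>M) = 4 * a\<^sup>2 / t\<^sup>2 + 2 / t ^ 4"
proof -
  note quartic = std_normal_distributed_quartic[OF M G]
  have square: "(\<lambda>\<omega>. (a + G \<omega> / t)\<^sup>2) =
      (\<lambda>\<omega>. a\<^sup>2 + 2 * a / t * G \<omega> + 1 / t\<^sup>2 * G \<omega> ^ 2 + 0 * G \<omega> ^ 3 + 0 * G \<omega> ^ 4)"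
    using t by (intro ext) (simp add: field_simps power2_eq_square)
  have centred: "D = (\<lambda>\<omega>. - 1 / t\<^sup>2 + 2 * a / t * G \<omega> + 1 / t\<^sup>2 * G \<omega> ^ 2 + 0 * G \<omega> ^ 3 + 0 * G \<omega> ^ 4)"
    unfolding D_def using t by (intro ext) (simp add: field_simps power2_eq_square)
  have centred_square: "(\<lambda>\<omega>. (D \<omega>)\<^sup>2) = (\<lambda>\<omega>. 1 / t ^ 4 + (- 4 * a / t ^ 3) * G \<omega>
      + (4 * a\<^sup>2 / t\<^sup>2 - 2 / t ^ 4) * G \<omega> ^ 2 + 4 * a / t ^ 3 * G \<omega> ^ 3 + 1 / t ^ 4 * G \<omega> ^ 4)"
    unfolding D_def using t by (intro ext) (simp add: field_simps power2_eq_square eval_nat_numeral)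
  show "integrable M (\<lambda>\<omega>. (a + G \<omega> / t)\<^sup>2)"
    unfolding square by (rule quartic(1))
  show "integrable M D"
    unfolding centred by (rule quartic(1))
  show "integrable M (\<lambda>\<omega>. (D \<omega>)\<^sup>2)"
    unfolding centred_square by (rule quartic(1))
  show "(\<integral>\<omega>. (a + G \<omega> / t)\<^sup>2 \<partial>M) = a\<^sup>2 + 1 / t\<^sup>2"
    unfolding square quartic(2) by simp
  show "(\<integral>\<omega>. D \<omega> \<partial>M) = 0"
    unfolding centred quartic(2) by simp
  show "(\<integral>\<omega>. (D \<omega>)\<^sup>2 \<partial>M) = 4 * a\<^sup>2 / t\<^sup>2 + 2 / t ^ 4"
    unfolding centred_square quartic(2) by (simp add: field_simps)
qed

lemma AE_summable_of_summable_integral: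
  fixes g :: "nat \<Rightarrow> 'a \<Rightarrow> real"
  assumes integrable: "\<And>k. integrable M (g k)" and nonneg: "\<And>k \<omega>. 0 \<le> g k \<omega>"
    and summable: "summable (\<lambda>k. \<integral>\<omega>. g k \<omega> \<partial>M)"
  shows "AE \<omega> in M. summable (\<lambda>k. g k \<omega>)"
proof -
  have [measurable]: "g k \<in> borel_measurable M" for k
    using integrable by blast
  have "(\<integral>\<^sup>+\<omega>. (\<Sum>k. ennreal (g k \<omega>)) \<partial>M) = (\<Sum>k. \<integral>\<^sup>+\<omega>. ennreal (g k \<omega>) \<partial>M)"
    by (rule nn_integral_suminf) simp
  also have "\<dots> = ennreal (\<Sum>k. \<integral>\<omega>. g k \<omega> \<partial>M)"
    using nn_integral_eq_integral[OF integrable] nonneg summable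
    by (simp add: suminf_ennreal2 integral_nonneg_AE)
  finally have "(\<integral>\<^sup>+\<omega>. (\<Sum>k. ennreal (g k \<omega>)) \<partial>M) \<noteq> \<infinity>"
    by simp
  then have "AE \<omega> in M. (\<Sum>k. ennreal (g k \<omega>)) \<noteq> \<infinity>"
    by (intro nn_integral_noteq_infinite) simp
  then show ?thesis
    by eventually_elim (rule summable_suminf_not_top[OF nonneg], simp)
qed

lemma integral_square_limit_le:
  fixes P :: "nat \<Rightarrow> 'a \<Rightarrow> real"
  assumes [measurable]: "\<And>N. P N \<in> borel_measurable M"
    and limit: "AE \<omega> in M. (\<lambda>N. P N \<omega>) \<longlonglongrightarrow> L \<omega>"
    and integrable: "\<And>N. integrable M (\<lambda>\<omega>. (P N \<omega>)\<^sup>2)"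
    and bound: "\<And>N. (\<integral>\<omega>. (P N \<omega>)\<^sup>2 \<partial>M) \<le> B"
  shows "(\<integral>\<omega>. (L \<omega>)\<^sup>2 \<partial>M) \<le> B"
proof -
  have "0 \<le> (\<integral>\<omega>. (P 0 \<omega>)\<^sup>2 \<partial>M)"
    by (intro integral_nonneg_AE) simp
  then have B: "B \<ge> 0"
    using bound[of 0] by linarith
  have "(\<integral>\<^sup>+\<omega>. ennreal ((L \<omega>)\<^sup>2) \<partial>M) = (\<integral>\<^sup>+\<omega>. liminf (\<lambda>N. ennreal ((P N \<omega>)\<^sup>2)) \<partial>M)"
    using limit
    by (intro nn_integral_cong_AE, eventually_elim)
       (rule lim_imp_Liminf[symmetric], simp_all add: tendsto_power)
  also have "\<dots> \<le> liminf (\<lambda>N. \<integral>\<^sup>+\<omega>. ennreal ((P N \<omega>)\<^sup>2) \<partial>M)"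
    by (rule nn_integral_liminf) simp
  also have "\<dots> \<le> limsup (\<lambda>N. \<integral>\<^sup>+\<omega>. ennreal ((P N \<omega>)\<^sup>2) \<partial>M)"
    by (rule Liminf_le_Limsup) simp
  also have "\<dots> \<le> ennreal B"
    using nn_integral_eq_integral[OF integrable] bound
    by (intro Limsup_bounded always_eventually allI) (simp add: ennreal_leI)
  finally show ?thesis
    by (intro integral_real_bounded B)
qed

lemma (in prob_space) variance_le_mean_square:
  fixes X :: "'a \<Rightarrow> real"
  assumes [measurable]: "X \<in> borel_measurable M"
  shows "(\<integral>\<omega>. (X \<omega> - expectation X)\<^sup>2 \<partial>M) \<le> (\<integral>\<omega>. (X \<omega> - d)\<^sup>2 \<partial>M)"
proof (cases "integrable M (\<lambda>\<omega>. (X \<omega> - expectation X)\<^sup>2)")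
  case True
  define \<mu> where "\<mu> = expectation X"
  have "integrable M (\<lambda>\<omega>. X \<omega> - \<mu>)"
    using True square_integrable_imp_integrable[of "\<lambda>\<omega>. X \<omega> - \<mu>"] by (simp add: \<mu>_def)
  then have X: "integrable M X"
    using Bochner_Integration.integrable_add[of M "\<lambda>\<omega>. X \<omega> - \<mu>" "\<lambda>_. \<mu>"] by simp
  have expand: "(X \<omega> - d)\<^sup>2 = (X \<omega> - \<mu>)\<^sup>2 + (2 * (\<mu> - d) * X \<omega> + (d\<^sup>2 - \<mu>\<^sup>2))" for \<omega>
    by (simp add: power2_eq_square algebra_simps)
  have "(\<integral>\<omega>. 2 * (\<mu> - d) * X \<omega> + (d\<^sup>2 - \<mu>\<^sup>2) \<partial>M) = (\<mu> - d)\<^sup>2"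
    using X by (simp add: prob_space flip: \<mu>_def) (simp add: power2_eq_square algebra_simps)
  then have "(\<integral>\<omega>. (X \<omega> - d)\<^sup>2 \<partial>M) = (\<integral>\<omega>. (X \<omega> - \<mu>)\<^sup>2 \<partial>M) + (\<mu> - d)\<^sup>2"
    unfolding expand using True X by (subst Bochner_Integration.integral_add) (auto simp: \<mu>_def)
  then show ?thesis
    by (simp add: \<mu>_def)
qed (simp add: not_integrable_integral_eq)

locale std_normal_sequence = prob_space M for M :: "'a measure" +
  fixes G :: "nat \<Rightarrow> 'a \<Rightarrow> real"
  assumes indep: "indep_vars (\<lambda>_. borel) G {1..}"
    and std_normal: "\<And>i. i \<ge> 1 \<Longrightarrow> distributed M lborel (G i) std_normal_density"
begin

definition centred_square :: "real \<Rightarrow> real \<Rightarrow> nat \<Rightarrow> 'a \<Rightarrow> real" where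
  "centred_square t a i \<omega> = (a + G i \<omega> / t)\<^sup>2 - (a\<^sup>2 + 1 / t\<^sup>2)"

lemma borel_measurable_G [measurable]: "i \<ge> 1 \<Longrightarrow> G i \<in> borel_measurable M"
  using distributed_measurable[OF std_normal] by simp

lemmas centred_square_moments =
  std_normal_distributed_shifted_square(3-6)[OF prob_space_axioms std_normal,
    folded centred_square_def]

lemma centred_squares_uncorrelated:
  assumes t: "t \<noteq> 0" and ij: "i \<ge> 1" "j \<ge> 1" "i \<noteq> j"
  shows "integrable M (\<lambda>\<omega>. centred_square t a i \<omega> * centred_square t b j \<omega>)"
    and "(\<integral>\<omega>. centred_square t a i \<omega> * centred_square t b j \<omega> \<partial>M) = 0"
proof -
  define c where "c k = (if k = i then a else b)" for k
  define D where "D k = centred_square t (c k) k" for k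
  have "indep_vars (\<lambda>_. borel) (\<lambda>k \<omega>. (c k + G k \<omega> / t)\<^sup>2 - ((c k)\<^sup>2 + 1 / t\<^sup>2)) {1..}"
    by (rule indep_vars_compose2[OF indep]) simp
  then have indep_D: "indep_vars (\<lambda>_. borel) D {i, j}"
    unfolding D_def centred_square_def by (rule indep_vars_subset) (use ij in auto)
  have integrable_D: "integrable M (D k)" and mean_D: "(\<integral>\<omega>. D k \<omega> \<partial>M) = 0" if "k \<in> {i, j}" for k
    using that ij centred_square_moments(1,2)[OF _ t] unfolding D_def by auto
  have product: "(\<lambda>\<omega>. \<Prod>k\<in>{i, j}. D k \<omega>) = (\<lambda>\<omega>. centred_square t a i \<omega> * centred_square t b j \<omega>)"
    using ij by (simp add: D_def c_def)
  show "integrable M (\<lambda>\<omega>. centred_square t a i \<omega> * centred_square t b j \<omega>)"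
    using indep_vars_integrable[OF _ indep_D integrable_D] product by simp
  show "(\<integral>\<omega>. centred_square t a i \<omega> * centred_square t b j \<omega> \<partial>M) = 0"
    using indep_vars_lebesgue_integral[OF _ indep_D integrable_D] mean_D product ij by simp
qed

lemma weighted_centred_squares_variance:
  assumes t: "t \<noteq> 0"
  shows "integrable M (\<lambda>\<omega>. (\<Sum>k<N. w k * centred_square t (a k) (Suc k) \<omega>)\<^sup>2)"
    and "(\<integral>\<omega>. (\<Sum>k<N. w k * centred_square t (a k) (Suc k) \<omega>)\<^sup>2 \<partial>M)
           = (\<Sum>k<N. (w k)\<^sup>2 * (4 * (a k)\<^sup>2 / t\<^sup>2 + 2 / t ^ 4))"
proof -
  define D where "D k = centred_square t (a k) (Suc k)" for k
  have square: "(\<lambda>\<omega>. (\<Sum>k<N. w k * D k \<omega>)\<^sup>2) = (\<lambda>\<omega>. \<Sum>j<N. \<Sum>k<N. w j * w k * (D j \<omega> * D k \<omega>))"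
    by (simp add: power2_eq_square sum_product mult_ac)
  have integrable_DD: "integrable M (\<lambda>\<omega>. w j * w k * (D j \<omega> * D k \<omega>))" for j k
    using centred_square_moments(3)[OF _ t, of "Suc k" "a k"]
      centred_squares_uncorrelated(1)[OF t, of "Suc j" "Suc k" "a j" "a k"]
    by (cases "j = k") (simp_all add: D_def power2_eq_square)
  have integral_DD: "(\<integral>\<omega>. w j * w k * (D j \<omega> * D k \<omega>) \<partial>M)
      = (if j = k then (w k)\<^sup>2 * (4 * (a k)\<^sup>2 / t\<^sup>2 + 2 / t ^ 4) else 0)" for j k
    using centred_square_moments(4)[OF _ t, of "Suc k" "a k"]
      centred_squares_uncorrelated(2)[OF t, of "Suc j" "Suc k" "a j" "a k"]
    by (cases "j = k") (simp_all add: D_def power2_eq_square)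
  show "integrable M (\<lambda>\<omega>. (\<Sum>k<N. w k * centred_square t (a k) (Suc k) \<omega>)\<^sup>2)"
    using integrable_DD by (simp add: D_def[symmetric] square)
  have "(\<integral>\<omega>. (\<Sum>k<N. w k * D k \<omega>)\<^sup>2 \<partial>M) = (\<Sum>j<N. \<Sum>k<N. \<integral>\<omega>. w j * w k * (D j \<omega> * D k \<omega>) \<partial>M)"
    unfolding square using integrable_DD by (simp add: Bochner_Integration.integral_sum)
  also have "\<dots> = (\<Sum>k<N. (w k)\<^sup>2 * (4 * (a k)\<^sup>2 / t\<^sup>2 + 2 / t ^ 4))"
    unfolding integral_DD by simp
  finally show "(\<integral>\<omega>. (\<Sum>k<N. w k * centred_square t (a k) (Suc k) \<omega>)\<^sup>2 \<partial>M)
      = (\<Sum>k<N. (w k)\<^sup>2 * (4 * (a k)\<^sup>2 / t\<^sup>2 + 2 / t ^ 4))"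
    by (simp add: D_def)
qed

lemma weighted_squares_mean_square_le:
  assumes t: "t \<noteq> 0" and w: "\<And>k. 0 \<le> w k"
    and summable_mean: "summable (\<lambda>k. w k * ((a k)\<^sup>2 + 1 / t\<^sup>2))"
    and summable_var: "summable (\<lambda>k. (w k)\<^sup>2 * (4 * (a k)\<^sup>2 / t\<^sup>2 + 2 / t ^ 4))"
  shows "(\<integral>\<omega>. ((\<Sum>k. w k * (a k + G (Suc k) \<omega> / t)\<^sup>2) - (\<Sum>k. w k * ((a k)\<^sup>2 + 1 / t\<^sup>2)))\<^sup>2 \<partial>M)
    \<le> (\<Sum>k. (w k)\<^sup>2 * (4 * (a k)\<^sup>2 / t\<^sup>2 + 2 / t ^ 4))"
proof (rule integral_square_limit_le)
  define g where "g k = (\<lambda>\<omega>. w k * (a k + G (Suc k) \<omega> / t)\<^sup>2)" for k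
  define m where "m k = w k * ((a k)\<^sup>2 + 1 / t\<^sup>2)" for k
  have integrable_g: "integrable M (g k)" and integral_g: "(\<integral>\<omega>. g k \<omega> \<partial>M) = m k" for k
    using std_normal_distributed_shifted_square(1,2)[OF prob_space_axioms std_normal t, of "Suc k" "a k"]
    by (simp_all add: g_def m_def)
  have "AE \<omega> in M. summable (\<lambda>k. g k \<omega>)"
  proof (rule AE_summable_of_summable_integral[OF integrable_g])
    show "summable (\<lambda>k. \<integral>\<omega>. g k \<omega> \<partial>M)"
      unfolding integral_g m_def by (rule summable_mean)
  qed (simp add: g_def w)
  then show "AE \<omega> in M. (\<lambda>N. \<Sum>k<N. w k * centred_square t (a k) (Suc k) \<omega>)
      \<longlonglongrightarrow> (\<Sum>k. w k * (a k + G (Suc k) \<omega> / t)\<^sup>2) - (\<Sum>k. w k * ((a k)\<^sup>2 + 1 / t\<^sup>2))"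
  proof eventually_elim
    case (elim \<omega>)
    have "(\<lambda>N. (\<Sum>k<N. g k \<omega>) - (\<Sum>k<N. m k)) \<longlonglongrightarrow> (\<Sum>k. g k \<omega>) - (\<Sum>k. m k)"
      using elim summable_mean unfolding m_def by (intro tendsto_diff summable_LIMSEQ)
    then show ?case
      by (simp add: g_def m_def centred_square_def sum_subtractf[symmetric] algebra_simps)
  qed
  show "(\<integral>\<omega>. (\<Sum>k<N. w k * centred_square t (a k) (Suc k) \<omega>)\<^sup>2 \<partial>M)
      \<le> (\<Sum>k. (w k)\<^sup>2 * (4 * (a k)\<^sup>2 / t\<^sup>2 + 2 / t ^ 4))" for N
    unfolding weighted_centred_squares_variance(2)[OF t]
    by (intro sum_le_suminf summable_var) simp_all
qed (use weighted_centred_squares_variance(1)[OF t] in \<open>simp_all add: centred_square_def\<close>)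

lemma variance_affine_weighted_squares_le:
  fixes b c :: real
  assumes t: "t \<noteq> 0" and w: "\<And>k. 0 \<le> w k"
    and summable_mean: "summable (\<lambda>k. w k * ((a k)\<^sup>2 + 1 / t\<^sup>2))"
    and summable_var: "summable (\<lambda>k. (w k)\<^sup>2 * (4 * (a k)\<^sup>2 / t\<^sup>2 + 2 / t ^ 4))"
  defines "X \<equiv> \<lambda>\<omega>. c * (b - (\<Sum>k. w k * (a k + G (Suc k) \<omega> / t)\<^sup>2))"
  shows "(\<integral>\<omega>. (X \<omega> - expectation X)\<^sup>2 \<partial>M) \<le> c\<^sup>2 * (\<Sum>k. (w k)\<^sup>2 * (4 * (a k)\<^sup>2 / t\<^sup>2 + 2 / t ^ 4))"
proof -
  define m where "m = (\<Sum>k. w k * ((a k)\<^sup>2 + 1 / t\<^sup>2))"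
  define V where "V \<omega> = (\<Sum>k. w k * (a k + G (Suc k) \<omega> / t)\<^sup>2)" for \<omega>
  have deviation: "(X \<omega> - c * (b - m))\<^sup>2 = c\<^sup>2 * (V \<omega> - m)\<^sup>2" for \<omega>
    unfolding X_def V_def[symmetric] by (simp add: power2_eq_square algebra_simps)
  have [measurable]: "X \<in> borel_measurable M"
    unfolding X_def by measurable
  have "(\<integral>\<omega>. (X \<omega> - expectation X)\<^sup>2 \<partial>M) \<le> (\<integral>\<omega>. (X \<omega> - c * (b - m))\<^sup>2 \<partial>M)"
    by (rule variance_le_mean_square) simp
  also have "\<dots> = c\<^sup>2 * (\<integral>\<omega>. ((\<Sum>k. w k * (a k + G (Suc k) \<omega> / t)\<^sup>2) - m)\<^sup>2 \<partial>M)"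
    unfolding deviation by (simp add: V_def)
  also have "\<dots> \<le> c\<^sup>2 * (\<Sum>k. (w k)\<^sup>2 * (4 * (a k)\<^sup>2 / t\<^sup>2 + 2 / t ^ 4))"
    unfolding m_def using weighted_squares_mean_square_le[OF t w summable_mean summable_var]
    by (intro mult_left_mono) simp_all
  finally show ?thesis .
qed

end

lemma powr_minus_le_powr_diff:
  fixes x \<gamma> :: real
  assumes x: "x > 0" and \<gamma>: "\<gamma> > 1"
  shows "(\<gamma> - 1) * (x + 1) powr (- \<gamma>) \<le> x powr (1 - \<gamma>) - (x + 1) powr (1 - \<gamma>)"
proof -
  have "\<exists>z. x < z \<and> z < x + 1 \<and>
      (x + 1) powr (1 - \<gamma>) - x powr (1 - \<gamma>) = (x + 1 - x) * ((1 - \<gamma>) * z powr (1 - \<gamma> - 1))"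
  proof (rule MVT2)
    show "((\<lambda>y. y powr (1 - \<gamma>)) has_real_derivative (1 - \<gamma>) * y powr (1 - \<gamma> - 1)) (at y)"
      if "x \<le> y" for y
      using that x by (intro has_real_derivative_powr) auto
  qed simp
  then obtain z where z: "x < z" "z < x + 1"
    and mvt: "(x + 1) powr (1 - \<gamma>) - x powr (1 - \<gamma>) = (1 - \<gamma>) * z powr (- \<gamma>)"
    by auto
  have "(\<gamma> - 1) * (x + 1) powr (- \<gamma>) \<le> (\<gamma> - 1) * z powr (- \<gamma>)"
    using z x \<gamma> by (intro mult_left_mono powr_mono2') auto
  then show ?thesis
    using mvt by (simp add: algebra_simps)
qed

lemma powr_tail_sum_le:
  fixes \<gamma> :: real
  assumes m: "m \<ge> 1" and \<gamma>: "\<gamma> > 1"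
  shows "summable (\<lambda>j. real (j + m) powr (- \<gamma>))"
    and "(\<Sum>j. real (j + m) powr (- \<gamma>)) \<le> real m powr (- \<gamma>) + real m powr (1 - \<gamma>) / (\<gamma> - 1)"
proof -
  show summable: "summable (\<lambda>j. real (j + m) powr (- \<gamma>))"
    using summable_iff_shift[of "\<lambda>j. real j powr (- \<gamma>)" m] \<gamma> by (simp add: summable_real_powr_iff)
  have telescope: "(\<gamma> - 1) * (\<Sum>j<J. real (Suc j + m) powr (- \<gamma>))
      \<le> real m powr (1 - \<gamma>) - real (m + J) powr (1 - \<gamma>)" for J
  proof (induction J)
    case (Suc J)
    have "(\<gamma> - 1) * real (Suc J + m) powr (- \<gamma>) \<le> real (m + J) powr (1 - \<gamma>) - real (m + Suc J) powr (1 - \<gamma>)"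
      using powr_minus_le_powr_diff[of "real (m + J)" \<gamma>] m \<gamma> by (simp add: add_ac)
    with Suc show ?case
      by (simp add: distrib_left)
  qed simp
  have "(\<Sum>j. real (Suc j + m) powr (- \<gamma>)) \<le> real m powr (1 - \<gamma>) / (\<gamma> - 1)"
  proof (rule suminf_le_const)
    show "summable (\<lambda>j. real (Suc j + m) powr (- \<gamma>))"
      using summable_iff_shift[of "\<lambda>j. real (j + m) powr (- \<gamma>)" 1] summable by simp
    show "(\<Sum>j<J. real (Suc j + m) powr (- \<gamma>)) \<le> real m powr (1 - \<gamma>) / (\<gamma> - 1)" for J
    proof -
      have "(\<gamma> - 1) * (\<Sum>j<J. real (Suc j + m) powr (- \<gamma>)) \<le> real m powr (1 - \<gamma>)"
        using telescope[of J] powr_ge_zero[of "real (m + J)" "1 - \<gamma>"] by linarith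
      then show ?thesis
        using \<gamma> by (simp add: field_simps)
    qed
  qed
  then show "(\<Sum>j. real (j + m) powr (- \<gamma>)) \<le> real m powr (- \<gamma>) + real m powr (1 - \<gamma>) / (\<gamma> - 1)"
    using suminf_split_head[OF summable] by simp
qed

lemma ratio_powr_tail_sum_le:
  fixes \<beta> n s :: real
  assumes \<beta>: "\<beta> \<ge> 1" and n: "n > 0" and s: "s \<ge> 3/2" and N: "n powr (1 / \<beta>) \<le> real N + 1"
  shows "summable (\<lambda>j. (n / real (j + N + 1) powr \<beta>) powr s)"
    and "(\<Sum>j. (n / real (j + N + 1) powr \<beta>) powr s) \<le> 1 + 2 * n powr (1 / \<beta>)"
proof -
  define E where "E = n powr (1 / \<beta>)"
  define \<gamma> where "\<gamma> = \<beta> * s"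
  have \<gamma>: "\<gamma> \<ge> 3/2"
    using mult_right_mono[of 1 \<beta> s] \<beta> s unfolding \<gamma>_def by linarith
  have E: "E > 0" and "E \<le> real (N + 1)"
    using n N by (simp_all add: E_def)
  have ratio: "(n / real (j + N + 1) powr \<beta>) powr s = n powr s * real (j + (N + 1)) powr (- \<gamma>)" for j
    using n by (simp add: \<gamma>_def powr_divide powr_powr powr_minus_divide add_ac)
  note tail = powr_tail_sum_le[of "N + 1" \<gamma>]
  show "summable (\<lambda>j. (n / real (j + N + 1) powr \<beta>) powr s)"
    unfolding ratio using tail(1) \<gamma> by (intro summable_mult) simp
  have n_E: "n powr s * E powr (- \<gamma>) = 1"
    using \<beta> n by (simp add: E_def \<gamma>_def powr_powr powr_minus field_simps)
  have "n powr s * (\<Sum>j. real (j + (N + 1)) powr (- \<gamma>))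
      \<le> n powr s * (E powr (- \<gamma>) + E powr (1 - \<gamma>) / (\<gamma> - 1))"
    using tail(2) \<gamma> E \<open>E \<le> real (N + 1)\<close>
    by (intro mult_left_mono order.trans[OF tail(2)] add_mono divide_right_mono powr_mono2') auto
  also have "\<dots> = 1 + E / (\<gamma> - 1)"
  proof -
    have "n powr s * E powr (1 - \<gamma>) = E * (n powr s * E powr (- \<gamma>))"
      using E by (simp add: powr_diff powr_minus field_simps)
    then show ?thesis
      using n_E by (simp add: distrib_left)
  qed
  also have "\<dots> \<le> 1 + 2 * E"
    using \<gamma> E by (simp add: field_simps)
  finally show "(\<Sum>j. (n / real (j + N + 1) powr \<beta>) powr s) \<le> 1 + 2 * n powr (1 / \<beta>)"
    unfolding ratio E_def using tail(1) \<gamma> by (simp add: suminf_mult)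
qed

lemma ln_square_mult_ratio_square_le:
  fixes n u :: real
  assumes n: "n > 0" and u: "n \<le> u"
  shows "(ln u)\<^sup>2 * (n / u)\<^sup>2 \<le> 2 * (ln n)\<^sup>2 * (n / u) powr 2 + 32 * (n / u) powr (3/2)"
proof -
  have r: "u / n \<ge> 1"
    using n u by simp
  have "(ln (u / n))\<^sup>2 \<le> ((u / n) powr (1/4) / (1/4))\<^sup>2"
    using r ln_powr_bound[OF r, of "1/4"] by (intro power_mono) auto
  also have "\<dots> = 16 * (u / n) powr (1/2)"
    using r by (simp add: power2_eq_square powr_add[symmetric])
  finally have ln_ratio: "(ln (u / n))\<^sup>2 \<le> 16 * (u / n) powr (1/2)" .
  have "ln u = ln n + ln (u / n)"
    using n u by (simp add: ln_div)
  then have "(ln u)\<^sup>2 \<le> 2 * (ln n)\<^sup>2 + 2 * (ln (u / n))\<^sup>2"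
    using sum_squares_bound[of "ln n" "ln (u / n)"] by (simp add: power2_eq_square algebra_simps)
  then have "(ln u)\<^sup>2 * (n / u) powr 2 \<le> (2 * (ln n)\<^sup>2 + 32 * (u / n) powr (1/2)) * (n / u) powr 2"
    using ln_ratio by (intro mult_right_mono) simp_all
  also have "\<dots> = 2 * (ln n)\<^sup>2 * (n / u) powr 2 + 32 * ((u / n) powr (1/2) * (n / u) powr 2)"
    by (simp only: distrib_right mult.assoc)
  also have "(u / n) powr (1/2) * (n / u) powr 2 = (n / u) powr (- (1/2) + 2)"
    unfolding powr_add using n u by (simp add: powr_minus_divide powr_divide)
  finally show ?thesis
    using n u by simp
qed

lemma ln_ge_two_thirds:
  fixes n :: real
  assumes "n \<ge> 2"
  shows "2 / 3 \<le> ln n"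
  using assms ln2_ge_two_thirds ln_le_cancel_iff[of 2 n] by linarith

lemma summable_ln_ratio_square_tail:
  fixes \<beta> n D :: real and T :: "nat \<Rightarrow> real"
  assumes \<beta>: "\<beta> \<ge> 1" and n: "n > 0" and D: "D \<ge> 0" and T: "\<And>k. 0 \<le> T k"
    and N: "n powr (1 / \<beta>) \<le> real N + 1"
    and above: "\<And>k. T k \<le> D * (ln (real (Suc k) powr \<beta>))\<^sup>2 * (n / real (Suc k) powr \<beta>)\<^sup>2"
  shows "summable (\<lambda>j. T (j + N))"
    and "(\<Sum>j. T (j + N)) \<le> D * (2 * (ln n)\<^sup>2 + 32) * (1 + 2 * n powr (1 / \<beta>))"
proof -
  define r where "r j = n / real (j + N + 1) powr \<beta>" for j
  define F where "F j = D * (2 * (ln n)\<^sup>2 * r j powr 2 + 32 * r j powr (3/2))" for j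
  have T_le_F: "T (j + N) \<le> F j" for j
  proof -
    define u where "u = real (Suc (j + N)) powr \<beta>"
    have "(n powr (1 / \<beta>)) powr \<beta> \<le> u"
      using N \<beta> unfolding u_def by (intro powr_mono2) auto
    then have "(ln u)\<^sup>2 * (n / u)\<^sup>2 \<le> 2 * (ln n)\<^sup>2 * r j powr 2 + 32 * r j powr (3/2)"
      using ln_square_mult_ratio_square_le[of n u] n \<beta>
      by (simp add: powr_powr r_def u_def add_ac)
    then show ?thesis
      using above[of "j + N"] mult_left_mono[OF _ D] unfolding F_def u_def by (smt (verit) mult.assoc)
  qed
  note ratio = ratio_powr_tail_sum_le[OF \<beta> n _ N, folded r_def]
  have summable_F: "summable F"
    unfolding F_def using ratio(1) by (intro summable_mult summable_add) auto
  show summable_tail: "summable (\<lambda>j. T (j + N))"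
    using T_le_F T by (intro summable_comparison_test'[OF summable_F]) auto
  have "(\<Sum>j. T (j + N)) \<le> suminf F"
    using T_le_F summable_tail summable_F by (intro suminf_le) auto
  also have "suminf F = D * (2 * (ln n)\<^sup>2 * (\<Sum>j. r j powr 2) + 32 * (\<Sum>j. r j powr (3/2)))"
    unfolding F_def using ratio(1) by (intro sums_unique[symmetric] sums_mult sums_add summable_sums) auto
  also have "\<dots> \<le> D * (2 * (ln n)\<^sup>2 * (1 + 2 * n powr (1 / \<beta>)) + 32 * (1 + 2 * n powr (1 / \<beta>)))"
    using ratio(2) D by (intro mult_left_mono add_mono) auto
  finally show "(\<Sum>j. T (j + N)) \<le> D * (2 * (ln n)\<^sup>2 + 32) * (1 + 2 * n powr (1 / \<beta>))"
    by (simp add: algebra_simps)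
qed

lemma summable_ln_ratio_square_bound:
  fixes \<beta> n D :: real and T :: "nat \<Rightarrow> real"
  assumes \<beta>: "\<beta> \<ge> 1" and n: "n \<ge> 2" and D: "D \<ge> 0" and T: "\<And>k. 0 \<le> T k"
    and below: "\<And>k. T k \<le> D * (ln (real (Suc k) powr \<beta>))\<^sup>2 * (real (Suc k) powr \<beta> / n)\<^sup>2"
    and above: "\<And>k. T k \<le> D * (ln (real (Suc k) powr \<beta>))\<^sup>2 * (n / real (Suc k) powr \<beta>)\<^sup>2"
  shows "summable T" and "suminf T \<le> 300 * D * n powr (1 / \<beta>) * (ln n)\<^sup>2"
proof -
  define E where "E = n powr (1 / \<beta>)"
  \<comment> \<open>below N the ratio i^beta / n is at most 1, from N on it is at least 1\<close>
  define N where "N = nat \<lfloor>E\<rfloor>"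
  have E: "E \<ge> 1" and E_powr: "E powr \<beta> = n"
    using n \<beta> by (simp_all add: E_def ge_one_powr_ge_zero powr_powr)
  have N: "real N \<le> E" "E \<le> real N + 1"
    using E by (simp_all add: N_def)
  have head: "T k \<le> D * (ln n)\<^sup>2" if "k < N" for k
  proof -
    define u where "u = real (Suc k) powr \<beta>"
    have "u \<le> E powr \<beta>"
      using that N \<beta> unfolding u_def by (intro powr_mono2) auto
    then have "u \<le> n" "1 \<le> u"
      using \<beta> by (simp_all add: E_powr u_def ge_one_powr_ge_zero)
    then have "(ln u)\<^sup>2 * (u / n)\<^sup>2 \<le> (ln n)\<^sup>2 * 1"
      using n by (intro mult_mono power_mono) (auto simp: power_le_one)
    then show ?thesis
      using below[of k] mult_left_mono[OF _ D] unfolding u_def by (smt (verit) mult.assoc)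
  qed
  have "0 < n"
    using n by simp
  note tail = summable_ln_ratio_square_tail[OF \<beta> this D T N(2)[unfolded E_def] above, folded E_def]
  show "summable T"
    using tail(1) by simp
  have "suminf T = (\<Sum>j. T (j + N)) + (\<Sum>k<N. T k)"
    using tail(1) by (intro suminf_split_initial_segment) simp
  also have "\<dots> \<le> D * (2 * (ln n)\<^sup>2 + 32) * (3 * E) + E * (D * (ln n)\<^sup>2)"
  proof (rule add_mono)
    have "D * (2 * (ln n)\<^sup>2 + 32) * (1 + 2 * E) \<le> D * (2 * (ln n)\<^sup>2 + 32) * (3 * E)"
      using D E by (intro mult_left_mono) auto
    then show "(\<Sum>j. T (j + N)) \<le> D * (2 * (ln n)\<^sup>2 + 32) * (3 * E)"
      using tail(2) by linarith
    have "(\<Sum>k<N. T k) \<le> real N * (D * (ln n)\<^sup>2)"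
      using head sum_bounded_above[of "{..<N}" T "D * (ln n)\<^sup>2"] by simp
    also have "\<dots> \<le> E * (D * (ln n)\<^sup>2)"
      using N D by (intro mult_right_mono) auto
    finally show "(\<Sum>k<N. T k) \<le> E * (D * (ln n)\<^sup>2)" .
  qed
  also have "\<dots> = D * E * (7 * (ln n)\<^sup>2 + 96)"
    by (simp add: algebra_simps)
  also have "\<dots> \<le> D * E * (300 * (ln n)\<^sup>2)"
  proof -
    have "4 / 9 \<le> (ln n)\<^sup>2"
      using power_mono[OF ln_ge_two_thirds[OF n], of 2] by (simp add: power2_eq_square)
    then show ?thesis
      using D E by (intro mult_left_mono) auto
  qed
  finally show "suminf T \<le> 300 * D * n powr (1 / \<beta>) * (ln n)\<^sup>2"
    by (simp add: E_def mult_ac)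
qed

lemma mult_div_square_sum_le:
  fixes B n :: real
  assumes "B > 0" "n > 0"
  shows "n * B / (B + n)\<^sup>2 \<le> B / n" and "n * B / (B + n)\<^sup>2 \<le> n / B"
proof -
  have "n * B * n \<le> B * (B + n)\<^sup>2" "n * B * B \<le> n * (B + n)\<^sup>2"
    using assms by (simp_all add: power2_eq_square algebra_simps)
  then show "n * B / (B + n)\<^sup>2 \<le> B / n" "n * B / (B + n)\<^sup>2 \<le> n / B"
    using assms by (simp_all add: field_simps)
qed

lemma mult_ln_div_square_sum_le:
  fixes B u C n :: real
  assumes B: "B > 0" and u: "1 \<le> u" "u \<le> C\<^sup>2 * B" and C: "C \<ge> 1" and n: "n \<ge> 2"
  shows "n * B * ln u / (B + n)\<^sup>2 \<le> (3 * ln C + 3) * ln n"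
proof -
  have ln_C: "ln C \<ge> 0" and ln_n: "ln n \<ge> 2 / 3" and ln_u: "ln u \<ge> 0"
    using C u ln_ge_two_thirds[OF n] by auto
  have "ln u \<le> ln (C\<^sup>2 * B)"
    using u by simp
  also have "\<dots> = 2 * ln C + ln B"
    using C B by (simp add: ln_mult ln_realpow)
  finally have ln_u_le: "ln u \<le> 2 * ln C + ln B" .
  have "n * B * ln u / (B + n)\<^sup>2 = n * B / (B + n)\<^sup>2 * ln u"
    by simp
  also have "\<dots> \<le> 2 * ln C + ln n + 1"
  proof (cases "B \<le> n")
    case True
    have "4 * (n * B) \<le> (B + n)\<^sup>2"
      using sum_squares_bound[of B n] by (simp add: power2_eq_square algebra_simps)
    then have "n * B / (B + n)\<^sup>2 * ln u \<le> 1 / 4 * ln u"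
      using B n ln_u by (intro mult_right_mono) (simp_all add: field_simps)
    moreover have "ln B \<le> ln n"
      using True B by simp
    ultimately show ?thesis
      using ln_u_le ln_C ln_n ln_u by linarith
  next
    case False
    have "n * B / (B + n)\<^sup>2 * ln u \<le> n / B * ln u"
      using mult_div_square_sum_le(2)[OF B] n ln_u by (intro mult_right_mono) auto
    also have "\<dots> \<le> n / B * (2 * ln C + ln n + B / n)"
      using ln_u_le ln_div[of B n] ln_bound[of "B / n"] B n by (intro mult_left_mono) auto
    also have "\<dots> = n / B * (2 * ln C + ln n) + 1"
      using B n by (simp add: field_simps)
    also have "\<dots> \<le> 2 * ln C + ln n + 1"
      using False B n ln_C ln_n mult_left_le_one_le[of "2 * ln C + ln n" "n / B"] by simp
    finally show ?thesis .
  qed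
  also have "\<dots> \<le> (3 * ln C + 3) * ln n"
    using mult_left_mono[of "2/3" "ln n" "ln C"] ln_C ln_n by (simp add: algebra_simps)
  finally show ?thesis .
qed

text \<open>The prior precision of kappa_i mu_i under the Gaussian prior mu_i ~ N(0, i^(-1-2 alpha))
  from which Mn is derived.\<close>

definition signal_precision :: "(nat \<Rightarrow> real) \<Rightarrow> real \<Rightarrow> nat \<Rightarrow> real" where
  "signal_precision \<kappa> \<alpha> i = real i powr (1 + 2 * \<alpha>) * \<kappa> i powr (-2)"

definition Mn_weight :: "(nat \<Rightarrow> real) \<Rightarrow> nat \<Rightarrow> real \<Rightarrow> nat \<Rightarrow> real" where
  "Mn_weight \<kappa> n \<alpha> i = (real n)\<^sup>2 * signal_precision \<kappa> \<alpha> i * ln (real i)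
     / (signal_precision \<kappa> \<alpha> i + real n)\<^sup>2"

lemma Mn_eq: "Mn \<kappa> n \<alpha> Y = Mn \<kappa> n \<alpha> (\<lambda>_. 0) - (\<Sum>k. Mn_weight \<kappa> n \<alpha> (Suc k) * (Y (Suc k))\<^sup>2)"
  by (simp add: Mn_def Mn_weight_def signal_precision_def Let_def mult.assoc)

locale mildly_ill_posed =
  fixes \<kappa> :: "nat \<Rightarrow> real" and p C :: real
  assumes p: "p \<ge> 0" and C: "C \<ge> 1"
    and \<kappa>_bounds: "\<And>i. i \<ge> 1 \<Longrightarrow>
         (1 / C) * real i powr (-p) \<le> \<kappa> i \<and> \<kappa> i \<le> C * real i powr (-p)"
begin

lemma \<kappa>_pos:
  assumes "i \<ge> 1"
  shows "0 < \<kappa> i"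
proof -
  have "0 < (1 / C) * real i powr (-p)"
    using assms C by simp
  then show ?thesis
    using \<kappa>_bounds[OF assms] by linarith
qed

lemma \<kappa>_le:
  assumes "i \<ge> 1"
  shows "\<kappa> i \<le> C"
proof -
  have "C * real i powr (-p) \<le> C * 1"
    using assms C p powr_mono[of "-p" 0 "real i"] by (intro mult_left_mono) auto
  then show ?thesis
    using \<kappa>_bounds[OF assms] by linarith
qed

lemma signal_precision_mult_square:
  "i \<ge> 1 \<Longrightarrow> signal_precision \<kappa> \<alpha> i * (\<kappa> i)\<^sup>2 = real i powr (1 + 2 * \<alpha>)"
  using \<kappa>_pos[of i] by (simp add: signal_precision_def powr_minus_divide)

lemma signal_precision_pos: "i \<ge> 1 \<Longrightarrow> 0 < signal_precision \<kappa> \<alpha> i"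
  using \<kappa>_pos[of i] by (simp add: signal_precision_def)

lemma signal_precision_bounds:
  assumes i: "i \<ge> 1"
  shows "real i powr (1 + 2 * \<alpha> + 2 * p) \<le> C\<^sup>2 * signal_precision \<kappa> \<alpha> i"
    and "signal_precision \<kappa> \<alpha> i \<le> C\<^sup>2 * real i powr (1 + 2 * \<alpha> + 2 * p)"
proof -
  define y where "y = \<kappa> i * real i powr p"
  have "(1 / C) * real i powr (-p) * real i powr p \<le> y" "y \<le> C * real i powr (-p) * real i powr p"
    using mult_right_mono[OF conjunct1[OF \<kappa>_bounds[OF i]], of "real i powr p"]
      mult_right_mono[OF conjunct2[OF \<kappa>_bounds[OF i]], of "real i powr p"]
    by (simp_all add: y_def)
  then have "1 / C \<le> y" "y \<le> C"
    using i by (simp_all add: mult.assoc powr_add[symmetric])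
  then have "1 \<le> C * y" "y \<le> C"
    using C by (simp_all add: field_simps)
  moreover from this have "0 < y"
    using C mult_nonneg_nonpos[of C y] by fastforce
  ultimately have y: "y\<^sup>2 \<le> C\<^sup>2" "1 \<le> C\<^sup>2 * y\<^sup>2"
    using power_mono[of y C 2] power_mono[of 1 "C * y" 2] by (simp_all add: power_mult_distrib)
  have "(real i powr p)\<^sup>2 = real i powr (2 * p)"
    by (simp add: power2_eq_square powr_add[symmetric])
  then have eq: "y\<^sup>2 * signal_precision \<kappa> \<alpha> i = real i powr (1 + 2 * \<alpha> + 2 * p)"
    using signal_precision_mult_square[OF i, of \<alpha>]
    by (simp add: y_def power_mult_distrib powr_add mult_ac)
  have "0 \<le> signal_precision \<kappa> \<alpha> i"
    by (simp add: signal_precision_def)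
  then show "real i powr (1 + 2 * \<alpha> + 2 * p) \<le> C\<^sup>2 * signal_precision \<kappa> \<alpha> i"
    and "signal_precision \<kappa> \<alpha> i \<le> C\<^sup>2 * real i powr (1 + 2 * \<alpha> + 2 * p)"
    using mult_right_mono[OF y(1)] mult_right_mono[OF y(2)] unfolding eq[symmetric] by (simp_all add: mult_ac)
qed

lemma Mn_weight_nonneg: "0 \<le> Mn_weight \<kappa> n \<alpha> i"
  unfolding Mn_weight_def signal_precision_def by (cases i) (auto intro!: divide_nonneg_nonneg)

lemma Mn_weight_le_powr:
  assumes i: "i \<ge> 1" and \<alpha>: "\<alpha> > 0"
  shows "Mn_weight \<kappa> n \<alpha> i \<le> (real n)\<^sup>2 * C\<^sup>2 / \<alpha> * real i powr (- (1 + \<alpha>))"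
proof (cases "n = 0")
  case False
  define prec where "prec = signal_precision \<kappa> \<alpha> i"
  have prec: "prec > 0" and prec_eq: "prec = real i powr (1 + 2 * \<alpha>) / (\<kappa> i)\<^sup>2"
    using signal_precision_mult_square[OF i, of \<alpha>] \<kappa>_pos[OF i] i
    by (simp_all add: prec_def signal_precision_def field_simps)
  have ln_i: "0 \<le> ln (real i)" "ln (real i) \<le> real i powr \<alpha> / \<alpha>"
    using i ln_powr_bound[of "real i" \<alpha>] \<alpha> by auto
  have "Mn_weight \<kappa> n \<alpha> i \<le> (real n)\<^sup>2 * prec * ln (real i) / prec\<^sup>2"
    unfolding Mn_weight_def prec_def[symmetric] using prec ln_i
    by (intro divide_left_mono power_mono mult_pos_pos) auto
  also have "\<dots> = (real n)\<^sup>2 * (\<kappa> i)\<^sup>2 * ln (real i) / real i powr (1 + 2 * \<alpha>)"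
    using prec \<kappa>_pos[OF i] i by (simp add: prec_eq power2_eq_square field_simps)
  also have "\<dots> \<le> (real n)\<^sup>2 * C\<^sup>2 * (real i powr \<alpha> / \<alpha>) / real i powr (1 + 2 * \<alpha>)"
    using ln_i \<kappa>_le[OF i] \<kappa>_pos[OF i] i
    by (intro divide_right_mono mult_mono mult_left_mono power_mono) auto
  also have "\<dots> = (real n)\<^sup>2 * C\<^sup>2 / \<alpha> * real i powr (\<alpha> - (1 + 2 * \<alpha>))"
    by (subst powr_diff) simp
  also have "\<alpha> - (1 + 2 * \<alpha>) = - (1 + \<alpha>)"
    by simp
  finally show ?thesis .
qed (simp add: Mn_weight_def)

lemma scaled_Mn_weight_eq:
  assumes "i \<ge> 1" "n > 0"
  shows "(1 + 2 * \<alpha> + 2 * p) * Mn_weight \<kappa> n \<alpha> i / real n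
    = real n * signal_precision \<kappa> \<alpha> i * ln (real i powr (1 + 2 * \<alpha> + 2 * p))
        / (signal_precision \<kappa> \<alpha> i + real n)\<^sup>2"
  using assms by (simp add: Mn_weight_def power2_eq_square)

lemma scaled_Mn_weight_le_ln:
  assumes i: "i \<ge> 1" and \<alpha>: "\<alpha> > 0" and n: "n \<ge> 2"
  shows "(1 + 2 * \<alpha> + 2 * p) * Mn_weight \<kappa> n \<alpha> i / real n \<le> (3 * ln C + 3) * ln (real n)"
proof -
  have "1 \<le> real i powr (1 + 2 * \<alpha> + 2 * p)"
    using i \<alpha> p by (intro ge_one_powr_ge_zero) auto
  moreover have n0: "0 < n"
    using n by simp
  ultimately show ?thesis
    unfolding scaled_Mn_weight_eq[OF i n0] using n signal_precision_pos[OF i] signal_precision_bounds(1)[OF i] C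
    by (intro mult_ln_div_square_sum_le) auto
qed

lemma scaled_Mn_weight_square_le:
  assumes i: "i \<ge> 1" and \<alpha>: "\<alpha> > 0" and n: "n > 0"
  defines "u \<equiv> real i powr (1 + 2 * \<alpha> + 2 * p)"
  shows "((1 + 2 * \<alpha> + 2 * p) * Mn_weight \<kappa> n \<alpha> i / real n)\<^sup>2 \<le> C ^ 4 * (ln u)\<^sup>2 * (u / real n)\<^sup>2"
    and "((1 + 2 * \<alpha> + 2 * p) * Mn_weight \<kappa> n \<alpha> i / real n)\<^sup>2 \<le> C ^ 4 * (ln u)\<^sup>2 * (real n / u)\<^sup>2"
proof -
  define prec where "prec = signal_precision \<kappa> \<alpha> i"
  define r where "r = real n * prec / (prec + real n)\<^sup>2"
  have prec: "prec > 0"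
    using signal_precision_pos[OF i] by (simp add: prec_def)
  have u: "u \<ge> 1" "u \<le> C\<^sup>2 * prec" "prec \<le> C\<^sup>2 * u"
    using i \<alpha> p signal_precision_bounds[OF i, of \<alpha>]
    by (auto simp: u_def prec_def intro!: ge_one_powr_ge_zero)
  have eq: "(1 + 2 * \<alpha> + 2 * p) * Mn_weight \<kappa> n \<alpha> i / real n = r * ln u"
    unfolding scaled_Mn_weight_eq[OF i n] by (simp add: r_def prec_def u_def)
  have "r \<le> prec / real n" "prec / real n \<le> C\<^sup>2 * (u / real n)"
    using mult_div_square_sum_le(1)[OF prec, of "real n"] n u by (simp_all add: r_def divide_right_mono)
  moreover have "r \<le> real n / prec" "real n / prec \<le> C\<^sup>2 * (real n / u)"
    using mult_div_square_sum_le(2)[OF prec, of "real n"] n prec u C by (simp_all add: r_def field_simps)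
  moreover have "0 \<le> r"
    using prec by (simp add: r_def)
  ultimately have r: "0 \<le> r" "r \<le> C\<^sup>2 * (u / real n)" "r \<le> C\<^sup>2 * (real n / u)"
    by linarith+
  show "((1 + 2 * \<alpha> + 2 * p) * Mn_weight \<kappa> n \<alpha> i / real n)\<^sup>2 \<le> C ^ 4 * (ln u)\<^sup>2 * (u / real n)\<^sup>2"
    and "((1 + 2 * \<alpha> + 2 * p) * Mn_weight \<kappa> n \<alpha> i / real n)\<^sup>2 \<le> C ^ 4 * (ln u)\<^sup>2 * (real n / u)\<^sup>2"
    unfolding eq
  proof -
    have "(r * ln u)\<^sup>2 \<le> (c * ln u)\<^sup>2" if "r \<le> c" for c
      using that r(1) u(1) by (intro power_mono mult_right_mono) auto
    moreover have "(C\<^sup>2 * x * ln u)\<^sup>2 = C ^ 4 * (ln u)\<^sup>2 * x\<^sup>2" for x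
      by (simp add: power_mult_distrib flip: power_mult)
    ultimately show "(r * ln u)\<^sup>2 \<le> C ^ 4 * (ln u)\<^sup>2 * (u / real n)\<^sup>2"
      and "(r * ln u)\<^sup>2 \<le> C ^ 4 * (ln u)\<^sup>2 * (real n / u)\<^sup>2"
      using r by metis+
  qed
qed

lemma summable_Mn_weight:
  assumes "\<alpha> > 0"
  shows "summable (\<lambda>k. Mn_weight \<kappa> n \<alpha> (Suc k))"
proof (rule summable_comparison_test')
  show "summable (\<lambda>k. (real n)\<^sup>2 * C\<^sup>2 / \<alpha> * real (Suc k) powr (- (1 + \<alpha>)))"
    using powr_tail_sum_le(1)[of 1 "1 + \<alpha>"] assms by (intro summable_mult) simp
  show "norm (Mn_weight \<kappa> n \<alpha> (Suc k)) \<le> (real n)\<^sup>2 * C\<^sup>2 / \<alpha> * real (Suc k) powr (- (1 + \<alpha>))" for k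
    using Mn_weight_le_powr[of "Suc k"] Mn_weight_nonneg assms by simp
qed

lemma summable_Mn_weight_signal:
  assumes \<alpha>: "\<alpha> > 0" and \<mu>: "summable (\<lambda>k. (\<mu> (Suc k))\<^sup>2)"
  shows "summable (\<lambda>k. Mn_weight \<kappa> n \<alpha> (Suc k) * (\<kappa> (Suc k) * \<mu> (Suc k))\<^sup>2)"
proof (rule summable_comparison_test')
  show "summable (\<lambda>k. (real n)\<^sup>2 * C\<^sup>2 / \<alpha> * C\<^sup>2 * (\<mu> (Suc k))\<^sup>2)"
    using \<mu> by (intro summable_mult)
  fix k
  have "real (Suc k) powr (- (1 + \<alpha>)) \<le> 1"
    using \<alpha> powr_mono[of "- (1 + \<alpha>)" 0 "real (Suc k)"] by simp
  then have "(real n)\<^sup>2 * C\<^sup>2 / \<alpha> * real (Suc k) powr (- (1 + \<alpha>)) \<le> (real n)\<^sup>2 * C\<^sup>2 / \<alpha>"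
    using \<alpha> by (intro mult_left_le) auto
  then have "Mn_weight \<kappa> n \<alpha> (Suc k) \<le> (real n)\<^sup>2 * C\<^sup>2 / \<alpha>"
    using Mn_weight_le_powr[of "Suc k" \<alpha> n] \<alpha> by simp
  moreover have "(\<kappa> (Suc k))\<^sup>2 \<le> C\<^sup>2"
    using \<kappa>_pos[of "Suc k"] \<kappa>_le[of "Suc k"] by (intro power_mono) auto
  ultimately have "Mn_weight \<kappa> n \<alpha> (Suc k) * (\<kappa> (Suc k))\<^sup>2 \<le> (real n)\<^sup>2 * C\<^sup>2 / \<alpha> * C\<^sup>2"
    using Mn_weight_nonneg \<alpha> by (intro mult_mono) auto
  from mult_right_mono[OF this, of "(\<mu> (Suc k))\<^sup>2"]
  show "norm (Mn_weight \<kappa> n \<alpha> (Suc k) * (\<kappa> (Suc k) * \<mu> (Suc k))\<^sup>2)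
      \<le> (real n)\<^sup>2 * C\<^sup>2 / \<alpha> * C\<^sup>2 * (\<mu> (Suc k))\<^sup>2"
    using Mn_weight_nonneg by (simp add: power_mult_distrib mult_ac)
qed

lemma summable_scaled_Mn_weight_square:
  assumes \<alpha>: "\<alpha> > 0" and n: "n \<ge> 2"
  defines "\<beta> \<equiv> 1 + 2 * \<alpha> + 2 * p"
  shows "summable (\<lambda>k. (\<beta> * Mn_weight \<kappa> n \<alpha> (Suc k) / real n)\<^sup>2)"
    and "(\<Sum>k. (\<beta> * Mn_weight \<kappa> n \<alpha> (Suc k) / real n)\<^sup>2)
           \<le> 300 * C ^ 4 * real n powr (1 / \<beta>) * (ln (real n))\<^sup>2"
proof -
  have \<beta>: "\<beta> \<ge> 1" and n': "real n \<ge> 2"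
    using \<alpha> p n by (simp_all add: \<beta>_def)
  have "0 < n"
    using n by simp
  note bounds = scaled_Mn_weight_square_le[OF _ \<alpha> this, folded \<beta>_def]
  show "summable (\<lambda>k. (\<beta> * Mn_weight \<kappa> n \<alpha> (Suc k) / real n)\<^sup>2)"
    and "(\<Sum>k. (\<beta> * Mn_weight \<kappa> n \<alpha> (Suc k) / real n)\<^sup>2)
           \<le> 300 * C ^ 4 * real n powr (1 / \<beta>) * (ln (real n))\<^sup>2"
    using summable_ln_ratio_square_bound[OF \<beta> n', of "C ^ 4"] bounds[of "Suc _"] C by simp_all
qed

lemma hn_eq:
  "hn \<kappa> p \<mu> n \<alpha> = (1 + 2 * \<alpha> + 2 * p) / (real n powr (1 / (1 + 2 * \<alpha> + 2 * p)) * ln (real n))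
     * (\<Sum>k. Mn_weight \<kappa> n \<alpha> (Suc k) * (\<kappa> (Suc k) * \<mu> (Suc k))\<^sup>2)"
proof -
  have "Mn_weight \<kappa> n \<alpha> (Suc k) * (\<kappa> (Suc k) * \<mu> (Suc k))\<^sup>2
      = (real n)\<^sup>2 * real (Suc k) powr (1 + 2 * \<alpha>) * (\<mu> (Suc k))\<^sup>2 * ln (real (Suc k))
        / (real (Suc k) powr (1 + 2 * \<alpha>) * \<kappa> (Suc k) powr (-2) + real n)\<^sup>2" for k
    using signal_precision_mult_square[of "Suc k" \<alpha>]
    by (simp add: Mn_weight_def signal_precision_def field_simps)
  then show ?thesis
    by (simp add: hn_def Let_def)
qed

lemma scaled_Mn_variance_term_le:
  assumes i: "i \<ge> 1" and \<alpha>: "\<alpha> > 0" and n: "n \<ge> 2"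
  defines "\<beta> \<equiv> 1 + 2 * \<alpha> + 2 * p"
  shows "\<beta>\<^sup>2 * ((Mn_weight \<kappa> n \<alpha> i)\<^sup>2 * (4 * x\<^sup>2 / real n + 2 / (real n)\<^sup>2))
    \<le> 4 * \<beta> * (3 * ln C + 3) * ln (real n) * (Mn_weight \<kappa> n \<alpha> i * x\<^sup>2)
       + 2 * (\<beta> * Mn_weight \<kappa> n \<alpha> i / real n)\<^sup>2"
proof -
  define w where "w = Mn_weight \<kappa> n \<alpha> i"
  have "\<beta> * w / real n * (w * x\<^sup>2) \<le> (3 * ln C + 3) * ln (real n) * (w * x\<^sup>2)"
    using scaled_Mn_weight_le_ln[OF i \<alpha> n] Mn_weight_nonneg
    by (intro mult_right_mono) (simp_all add: w_def \<beta>_def)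
  then have "4 * \<beta> * (\<beta> * w / real n * (w * x\<^sup>2)) \<le> 4 * \<beta> * ((3 * ln C + 3) * ln (real n) * (w * x\<^sup>2))"
    using \<alpha> p by (intro mult_left_mono) (simp_all add: \<beta>_def)
  moreover have "\<beta>\<^sup>2 * (w\<^sup>2 * (4 * x\<^sup>2 / real n + 2 / (real n)\<^sup>2))
      = 4 * \<beta> * (\<beta> * w / real n * (w * x\<^sup>2)) + 2 * (\<beta> * w / real n)\<^sup>2"
    using n by (simp add: power2_eq_square field_simps)
  ultimately show ?thesis
    unfolding w_def[symmetric] by (simp add: mult.assoc)
qed

lemma Mn_variance_terms_sum_le:
  assumes \<alpha>: "\<alpha> > 0" and n: "n \<ge> 2" and \<mu>: "summable (\<lambda>k. (\<mu> (Suc k))\<^sup>2)"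
  defines "\<beta> \<equiv> 1 + 2 * \<alpha> + 2 * p"
    and "v \<equiv> \<lambda>k. (Mn_weight \<kappa> n \<alpha> (Suc k))\<^sup>2
                  * (4 * (\<kappa> (Suc k) * \<mu> (Suc k))\<^sup>2 / real n + 2 / (real n)\<^sup>2)"
    and "s \<equiv> \<lambda>k. Mn_weight \<kappa> n \<alpha> (Suc k) * (\<kappa> (Suc k) * \<mu> (Suc k))\<^sup>2"
  shows "summable v" and "summable s"
    and "\<beta>\<^sup>2 * suminf v \<le> 4 * (3 * ln C + 3) * ln (real n) * (\<beta> * suminf s)
           + 600 * C ^ 4 * real n powr (1 / \<beta>) * (ln (real n))\<^sup>2"
proof -
  define q where "q = (\<lambda>k. \<beta> * Mn_weight \<kappa> n \<alpha> (Suc k) / real n)"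
  define c where "c = 4 * \<beta> * (3 * ln C + 3) * ln (real n)"
  have \<beta>: "\<beta> \<ge> 1"
    using \<alpha> p by (simp add: \<beta>_def)
  have v_le: "\<beta>\<^sup>2 * v k \<le> c * s k + 2 * (q k)\<^sup>2" for k
    using scaled_Mn_variance_term_le[of "Suc k" \<alpha> n] \<alpha> n by (simp add: v_def s_def q_def c_def \<beta>_def)
  show summable_s: "summable s"
    unfolding s_def using summable_Mn_weight_signal[OF \<alpha> \<mu>] .
  have summable_q: "summable (\<lambda>k. (q k)\<^sup>2)"
    and sum_q: "(\<Sum>k. (q k)\<^sup>2) \<le> 300 * C ^ 4 * real n powr (1 / \<beta>) * (ln (real n))\<^sup>2"
    using summable_scaled_Mn_weight_square[OF \<alpha> n] by (simp_all add: q_def \<beta>_def)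
  have summable_bound: "summable (\<lambda>k. c * s k + 2 * (q k)\<^sup>2)"
    using summable_s summable_q by (intro summable_add summable_mult)
  show summable_v: "summable v"
  proof (rule summable_comparison_test')
    show "norm (v k) \<le> (c * s k + 2 * (q k)\<^sup>2) / \<beta>\<^sup>2" for k
      using v_le[of k] \<beta> by (simp add: v_def field_simps)
  qed (use summable_bound in \<open>intro summable_divide\<close>)
  have "\<beta>\<^sup>2 * suminf v = (\<Sum>k. \<beta>\<^sup>2 * v k)"
    using summable_v by (simp add: suminf_mult)
  also have "\<dots> \<le> (\<Sum>k. c * s k + 2 * (q k)\<^sup>2)"
    using summable_v summable_bound by (intro suminf_le v_le summable_mult)
  also have "\<dots> = c * suminf s + 2 * (\<Sum>k. (q k)\<^sup>2)"
    using summable_s summable_q by (intro sums_unique[symmetric] sums_add sums_mult summable_sums)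
  finally show "\<beta>\<^sup>2 * suminf v \<le> 4 * (3 * ln C + 3) * ln (real n) * (\<beta> * suminf s)
      + 600 * C ^ 4 * real n powr (1 / \<beta>) * (ln (real n))\<^sup>2"
    using sum_q by (simp add: c_def mult_ac)
qed

lemma Mn_variance_sum_le:
  assumes \<alpha>: "\<alpha> > 0" and n: "n \<ge> 2" and \<mu>: "summable (\<lambda>k. (\<mu> (Suc k))\<^sup>2)"
  defines "\<beta> \<equiv> 1 + 2 * \<alpha> + 2 * p"
    and "v \<equiv> \<lambda>k. (Mn_weight \<kappa> n \<alpha> (Suc k))\<^sup>2
                  * (4 * (\<kappa> (Suc k) * \<mu> (Suc k))\<^sup>2 / real n + 2 / (real n)\<^sup>2)"
  shows "(\<beta> / real n powr (1 / \<beta>))\<^sup>2 * suminf v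
           \<le> (600 * C ^ 4 + 4 * (3 * ln C + 3))
              * (real n powr (- 1 / \<beta>) * (ln (real n))\<^sup>2 * (1 + hn \<kappa> p \<mu> n \<alpha>))"
proof -
  define E where "E = real n powr (1 / \<beta>)"
  define L where "L = ln (real n)"
  define K3 where "K3 = 3 * ln C + 3"
  note sum_le = Mn_variance_terms_sum_le[OF \<alpha> n \<mu>, folded \<beta>_def v_def]
  have E: "E > 0" and L: "L > 0" and K3: "K3 > 0"
    using n ln_ge_zero[OF C] by (simp_all add: E_def L_def K3_def)
  have hn: "\<beta> * (\<Sum>k. Mn_weight \<kappa> n \<alpha> (Suc k) * (\<kappa> (Suc k) * \<mu> (Suc k))\<^sup>2) = E * L * hn \<kappa> p \<mu> n \<alpha>"
    using E L by (simp add: hn_eq E_def L_def \<beta>_def)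
  have "0 \<le> E * L * hn \<kappa> p \<mu> n \<alpha>"
    unfolding hn[symmetric] using sum_le(2) Mn_weight_nonneg \<alpha> p
    by (intro mult_nonneg_nonneg suminf_nonneg) (simp_all add: \<beta>_def)
  then have "0 \<le> hn \<kappa> p \<mu> n \<alpha>"
    using mult_pos_pos[OF E L] by (simp add: zero_le_mult_iff)
  have "(\<beta> / E)\<^sup>2 * suminf v \<le> L\<^sup>2 / E * (4 * K3 * hn \<kappa> p \<mu> n \<alpha> + 600 * C ^ 4)"
    using sum_le(3) E unfolding hn by (simp add: E_def L_def K3_def field_simps power2_eq_square)
  also have "\<dots> \<le> L\<^sup>2 / E * ((600 * C ^ 4 + 4 * K3) * (1 + hn \<kappa> p \<mu> n \<alpha>))"
    using \<open>0 \<le> hn \<kappa> p \<mu> n \<alpha>\<close> K3 E by (intro mult_left_mono) (simp_all add: algebra_simps)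
  finally show ?thesis
    by (simp add: E_def L_def K3_def powr_minus_divide divide_inverse mult_ac)
qed

lemma variance_scaled_Mn_le:
  assumes Z: "std_normal_sequence M Z" and \<mu>: "summable (\<lambda>k. (\<mu> (Suc k))\<^sup>2)"
    and \<alpha>: "\<alpha> > 0" and n: "n \<ge> 2"
  defines "X \<equiv> \<lambda>\<omega>. (1 + 2 * \<alpha> + 2 * p) * Mn \<kappa> n \<alpha> (\<lambda>i. Yobs \<kappa> \<mu> n Z i \<omega>)
                    / real n powr (1 / (1 + 2 * \<alpha> + 2 * p))"
  shows "(\<integral>\<omega>. (X \<omega> - (\<integral>\<omega>'. X \<omega>' \<partial>M))\<^sup>2 \<partial>M)
    \<le> (600 * C ^ 4 + 4 * (3 * ln C + 3))
       * (real n powr (- 1 / (1 + 2 * \<alpha> + 2 * p)) * (ln (real n))\<^sup>2 * (1 + hn \<kappa> p \<mu> n \<alpha>))"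
proof -
  define \<beta> where "\<beta> = 1 + 2 * \<alpha> + 2 * p"
  interpret std_normal_sequence M Z
    by (fact Z)
  define t where "t = sqrt (real n)"
  define w where "w = (\<lambda>k. Mn_weight \<kappa> n \<alpha> (Suc k))"
  define a where "a = (\<lambda>k. \<kappa> (Suc k) * \<mu> (Suc k))"
  have "t\<^sup>2 = real n"
    by (simp add: t_def)
  moreover have "t ^ 4 = (t\<^sup>2)\<^sup>2"
    by (simp flip: power_mult)
  ultimately have t: "t \<noteq> 0" "t\<^sup>2 = real n" "t ^ 4 = (real n)\<^sup>2"
    using n by (auto simp: t_def)
  have X_eq: "X = (\<lambda>\<omega>. \<beta> / real n powr (1 / \<beta>)
      * (Mn \<kappa> n \<alpha> (\<lambda>_. 0) - (\<Sum>k. w k * (a k + Z (Suc k) \<omega> / t)\<^sup>2)))"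
  proof
    fix \<omega>
    show "X \<omega> = \<beta> / real n powr (1 / \<beta>) * (Mn \<kappa> n \<alpha> (\<lambda>_. 0) - (\<Sum>k. w k * (a k + Z (Suc k) \<omega> / t)\<^sup>2))"
      unfolding X_def Mn_eq[of \<kappa> n \<alpha> "\<lambda>i. Yobs \<kappa> \<mu> n Z i \<omega>"]
      by (simp add: Yobs_def w_def a_def t_def \<beta>_def)
  qed
  have "summable (\<lambda>k. w k * (a k)\<^sup>2 + w k / real n)"
    using summable_Mn_weight_signal[OF \<alpha> \<mu>] summable_Mn_weight[OF \<alpha>]
    by (intro summable_add summable_divide) (simp_all add: w_def a_def)
  then have summable_mean: "summable (\<lambda>k. w k * ((a k)\<^sup>2 + 1 / t\<^sup>2))"
    by (simp add: t algebra_simps)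
  have summable_var: "summable (\<lambda>k. (w k)\<^sup>2 * (4 * (a k)\<^sup>2 / t\<^sup>2 + 2 / t ^ 4))"
    using Mn_variance_terms_sum_le(1)[OF \<alpha> n \<mu>] by (simp add: t w_def a_def)
  have "(\<integral>\<omega>. (X \<omega> - (\<integral>\<omega>'. X \<omega>' \<partial>M))\<^sup>2 \<partial>M)
      \<le> (\<beta> / real n powr (1 / \<beta>))\<^sup>2 * (\<Sum>k. (w k)\<^sup>2 * (4 * (a k)\<^sup>2 / t\<^sup>2 + 2 / t ^ 4))"
    unfolding X_eq using Mn_weight_nonneg
    by (intro variance_affine_weighted_squares_le t(1) summable_mean summable_var) (simp add: w_def)
  also have "\<dots> \<le> (600 * C ^ 4 + 4 * (3 * ln C + 3))
      * (real n powr (- 1 / \<beta>) * (ln (real n))\<^sup>2 * (1 + hn \<kappa> p \<mu> n \<alpha>))"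
    using Mn_variance_sum_le[OF \<alpha> n \<mu>, folded \<beta>_def] by (simp add: t w_def a_def)
  finally show ?thesis
    by (simp only: \<beta>_def)
qed

end

theorem lemma5p2:
  fixes \<kappa> :: "nat \<Rightarrow> real" and p C :: real
  assumes p: "p \<ge> 0" and C: "C \<ge> 1"
    and \<kappa>_bounds: "\<And>i. i \<ge> 1 \<Longrightarrow>
         (1 / C) * real i powr (-p) \<le> \<kappa> i \<and> \<kappa> i \<le> C * real i powr (-p)"
  shows "\<exists>K>0. \<forall>(M :: 'a measure) (Z :: nat \<Rightarrow> 'a \<Rightarrow> real) (\<mu>0 :: nat \<Rightarrow> real) (\<alpha>::real) (n::nat).
     prob_space M
     \<longrightarrow> prob_space.indep_vars M (\<lambda>_. borel) Z {1..}
     \<longrightarrow> (\<forall>i\<ge>1. distributed M lborel (Z i) std_normal_density)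
     \<longrightarrow> summable (\<lambda>k. (\<mu>0 (Suc k))\<^sup>2)
     \<longrightarrow> \<alpha> > 0 \<longrightarrow> n \<ge> 2
     \<longrightarrow> (let X = (\<lambda>\<omega>. (1 + 2*\<alpha> + 2*p) * Mn \<kappa> n \<alpha> (\<lambda>i. Yobs \<kappa> \<mu>0 n Z i \<omega>)
                        / real n powr (1 / (1 + 2*\<alpha> + 2*p)))
         in (\<integral>\<omega>. (X \<omega> - (\<integral>\<omega>'. X \<omega>' \<partial>M))\<^sup>2 \<partial>M))
        \<le> K * (real n powr (-1 / (1 + 2*\<alpha> + 2*p)) * (ln (real n))\<^sup>2 * (1 + hn \<kappa> p \<mu>0 n \<alpha>))"
proof -
  interpret mildly_ill_posed \<kappa> p C
    using assms by unfold_locales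
  have "0 < 600 * C ^ 4 + 4 * (3 * ln C + 3)"
    using C by (simp add: add_pos_nonneg)
  then show ?thesis
  proof (intro exI[of _ "600 * C ^ 4 + 4 * (3 * ln C + 3)"] conjI allI impI)
    fix M :: "'a measure" and Z :: "nat \<Rightarrow> 'a \<Rightarrow> real" and \<mu>0 :: "nat \<Rightarrow> real"
      and \<alpha> :: real and n :: nat
    assume "prob_space M" "prob_space.indep_vars M (\<lambda>_. borel) Z {1..}"
      "\<forall>i\<ge>1. distributed M lborel (Z i) std_normal_density"
    then have "std_normal_sequence M Z"
      by (simp add: std_normal_sequence_def std_normal_sequence_axioms_def)
    moreover assume "summable (\<lambda>k. (\<mu>0 (Suc k))\<^sup>2)" "\<alpha> > 0" "n \<ge> 2"
    ultimately show "(let X = (\<lambda>\<omega>. (1 + 2*\<alpha> + 2*p) * Mn \<kappa> n \<alpha> (\<lambda>i. Yobs \<kappa> \<mu>0 n Z i \<omega>)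
                        / real n powr (1 / (1 + 2*\<alpha> + 2*p)))
         in (\<integral>\<omega>. (X \<omega> - (\<integral>\<omega>'. X \<omega>' \<partial>M))\<^sup>2 \<partial>M))
        \<le> (600 * C ^ 4 + 4 * (3 * ln C + 3))
            * (real n powr (-1 / (1 + 2*\<alpha> + 2*p)) * (ln (real n))\<^sup>2 * (1 + hn \<kappa> p \<mu>0 n \<alpha>))"
      unfolding Let_def by (rule variance_scaled_Mn_le)
  qed
qed

end
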